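(* For all integers $n\ge 2$ and $k\ge 0$, the number of Fine $n$-paths having exactly $k$ long noninitial ascents equals \[\frac{1}{n+1}\binom{n-2-k}{k}2^{\,n-2-2k}\binom{n+1}{k+1}.\] Consequently the Fine number satisfies $F_n=\frac{1}{n+1}\sum_{k\ge 0}\binom{n-2-k}{k}2^{n-2-2k}\binom{n+1}{k+1}$.
   Context: A Dyck $n$-path is a path from $(0,0)$ to $(2n,0)$ with $n$ upsteps $U=(1,1)$ and $n$ downsteps $D=(1,-1)$ never going below the $x$-axis. A hill is a peak $UD$ whose top vertex is at height $1$. A Fine $n$-path is a Dyck $n$-path with no hills, and $F_n$ is the number of Fine $n$-paths. An ascent is a maximal run of consecutive upsteps; it is long if it has at least two steps and short if it has exactly one step. The initial ascent is the first ascent; all others are noninitial. Binomial coefficients with lower index outside $[0,\text{upper}]$ are $0$. *)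

theory Defs
  imports Complex_Main
begin

text \<open>A lattice path is a list of steps: True = upstep U, False = downstep D.\<close>

definition height :: "bool list \<Rightarrow> nat \<Rightarrow> int" where
  "height p i = int (count_list (take i p) True) - int (count_list (take i p) False)"

definition dyck_path :: "nat \<Rightarrow> bool list \<Rightarrow> bool" where
  "dyck_path n p \<longleftrightarrow> length p = 2 * n \<and> count_list p True = n \<and>
     (\<forall>i \<le> length p. height p i \<ge> 0)"

text \<open>A hill: a peak UD (steps i, i+1) whose top vertex (after step i) is at height 1.\<close>
definition has_hill :: "bool list \<Rightarrow> bool" where
  "has_hill p \<longleftrightarrow> (\<exists>i. Suc i < length p \<and> p ! i \<and> \<not> p ! Suc i \<and> height p (Suc i) = 1)"

definition fine_path :: "nat \<Rightarrow> bool list \<Rightarrow> bool" where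
  "fine_path n p \<longleftrightarrow> dyck_path n p \<and> \<not> has_hill p"

definition fine_number :: "nat \<Rightarrow> nat" where
  "fine_number n = card {p. fine_path n p}"

text \<open>Ascents are identified by their starting positions (maximal runs of upsteps).\<close>
definition ascent_starts :: "bool list \<Rightarrow> nat set" where
  "ascent_starts p = {i. i < length p \<and> p ! i \<and> (i = 0 \<or> \<not> p ! (i - 1))}"

definition ascent_length :: "bool list \<Rightarrow> nat \<Rightarrow> nat" where
  "ascent_length p i = length (takeWhile id (drop i p))"

definition long_noninitial_ascents :: "bool list \<Rightarrow> nat" where
  "long_noninitial_ascents p =
     card {i \<in> ascent_starts p. i \<noteq> Min (ascent_starts p) \<and> ascent_length p i \<ge> 2}"

end

theory Submission
  imports Defs "HOL-Computational_Algebra.Polynomial" "HOL-Computational_Algebra.Formal_Power_Series"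
begin

text \<open>
Cutting a nonempty Dyck path at its last return to the axis writes it uniquely as q U r D with
q and r Dyck paths. The factor DUU is created exactly when q and r are both nonempty, and a hill
exactly when r is empty; in a path starting with U the long noninitial ascents are exactly the
occurrences of DUU. With x marking semilength and t marking DUU, the generating function W of
nonempty Dyck paths therefore satisfies W = x (1 + 2 W + t W^2), the generating function G of
nonempty Fine paths satisfies G = x (1 + t G) W, and eliminating x gives G (1 + 2 W) = W^2.

The coefficients P_m of W^m have the closed form predicted by Lagrange inversion; it is verified
through the recurrence W^m = x (W^(m-1) + 2 W^m + t W^(m+1)), which determines them. For the
coefficients of G W^(m-2) a closed form R_m is guessed with R_m + 2 R_(m+1) = P_m, the relation
that G (1 + 2 W) = W^2 imposes on the series G W^(m-2); since both vanish in degree n once m > n,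
downward induction on m identifies them, and R_2 is the claimed count.
\<close>

section \<open>Paths as lists of steps\<close>

text \<open>Recursive reformulations of the path notions, suited to induction; the integer argument is
  the height at which the path starts.\<close>

definition step_height :: "bool \<Rightarrow> int" where
  "step_height b = (if b then 1 else -1)"

fun end_height :: "bool list \<Rightarrow> int" where
  "end_height [] = 0"
| "end_height (b # xs) = step_height b + end_height xs"

fun stays_nonneg :: "int \<Rightarrow> bool list \<Rightarrow> bool" where
  "stays_nonneg h [] \<longleftrightarrow> h \<ge> 0"
| "stays_nonneg h (b # xs) \<longleftrightarrow> h \<ge> 0 \<and> stays_nonneg (h + step_height b) xs"

fun hill_from :: "int \<Rightarrow> bool list \<Rightarrow> bool" where
  "hill_from h (a # b # xs) \<longleftrightarrow>
     (a \<and> \<not> b \<and> h = 0) \<or> hill_from (h + step_height a) (b # xs)"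
| "hill_from h _ \<longleftrightarrow> False"

fun duu_count :: "bool list \<Rightarrow> nat" where
  "duu_count (a # b # c # xs) = (if \<not> a \<and> b \<and> c then 1 else 0) + duu_count (b # c # xs)"
| "duu_count _ = 0"

definition is_dyck :: "bool list \<Rightarrow> bool" where
  "is_dyck p \<longleftrightarrow> end_height p = 0 \<and> stays_nonneg 0 p"

lemma end_height_append [simp]: "end_height (xs @ ys) = end_height xs + end_height ys"
  by (induction xs) auto

lemma end_height_eq_count:
  "end_height xs = int (count_list xs True) - int (count_list xs False)"
  by (induction xs) (auto simp: step_height_def)

lemma height_eq_end_height: "height p i = end_height (take i p)"
  unfolding height_def by (simp add: end_height_eq_count)

lemma stays_nonneg_iff:
  "stays_nonneg h xs \<longleftrightarrow> (\<forall>i \<le> length xs. h + end_height (take i xs) \<ge> 0)"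
proof (induction xs arbitrary: h)
  case (Cons b xs)
  have split_first: "(\<forall>i \<le> Suc n. P i) \<longleftrightarrow> P 0 \<and> (\<forall>i \<le> n. P (Suc i))" for P n
    unfolding less_Suc_eq_le[symmetric] by (rule All_less_Suc2)
  show ?case using Cons by (simp add: split_first add.assoc)
qed simp

lemma stays_nonneg_append:
  "stays_nonneg h (xs @ ys) \<longleftrightarrow> stays_nonneg h xs \<and> stays_nonneg (h + end_height xs) ys"
  by (induction xs arbitrary: h) (cases ys, auto simp: add.assoc)

lemma stays_nonneg_start: "stays_nonneg h xs \<Longrightarrow> h \<ge> 0"
  by (cases xs) auto

lemma stays_nonneg_end: "stays_nonneg h xs \<Longrightarrow> h + end_height xs \<ge> 0"
proof (induction xs arbitrary: h)
  case (Cons b xs)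
  then show ?case using Cons.IH[of "h + step_height b"] by (simp add: add.assoc)
qed simp

lemma stays_nonneg_mono: "stays_nonneg h xs \<Longrightarrow> h \<le> h' \<Longrightarrow> stays_nonneg h' xs"
  by (induction xs arbitrary: h h') auto

lemma dyck_path_iff_is_dyck: "dyck_path n p \<longleftrightarrow> length p = 2 * n \<and> is_dyck p"
proof -
  have "int (count_list p True) + int (count_list p False) = int (length p)"
    by (induction p) auto
  then show ?thesis
    unfolding dyck_path_def is_dyck_def height_eq_end_height stays_nonneg_iff
    using end_height_eq_count[of p] by auto
qed

lemma hill_from_iff:
  "hill_from h p \<longleftrightarrow>
     (\<exists>i. Suc i < length p \<and> p ! i \<and> \<not> p ! Suc i \<and> h + end_height (take (Suc i) p) = 1)"
proof (induction h p rule: hill_from.induct)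
  case (1 h a b xs)
  have split_first: "(\<exists>i. P i) \<longleftrightarrow> P 0 \<or> (\<exists>i. P (Suc i))" for P :: "nat \<Rightarrow> bool"
    by (metis not0_implies_Suc)
  show ?case
    by (subst split_first) (use 1 in \<open>auto simp: step_height_def add.assoc\<close>)
qed auto

lemma has_hill_iff_hill_from: "has_hill p \<longleftrightarrow> hill_from 0 p"
  unfolding has_hill_def hill_from_iff height_eq_end_height by simp

lemma duu_count_eq_card:
  "duu_count p = card {i. i + 2 < length p \<and> \<not> p ! i \<and> p ! (i + 1) \<and> p ! (i + 2)}"
proof (induction p rule: duu_count.induct)
  case (1 a b c xs)
  let ?S = "\<lambda>p. {i. i + 2 < length p \<and> \<not> p ! i \<and> p ! (i + 1) \<and> p ! (i + 2)}"
  have "?S (a # b # c # xs) = (if \<not> a \<and> b \<and> c then {0} else {}) \<union> Suc ` ?S (b # c # xs)"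
  proof (rule set_eqI)
    show "i \<in> ?S (a # b # c # xs) \<longleftrightarrow>
      i \<in> (if \<not> a \<and> b \<and> c then {0} else {}) \<union> Suc ` ?S (b # c # xs)" for i
      by (cases i) auto
  qed
  moreover have "finite (?S (b # c # xs))"
    by (rule finite_subset[of _ "{..<length (b # c # xs)}"]) auto
  ultimately show ?case using 1 by (simp add: card_image)
qed simp_all

lemma ascent_length_ge_2_iff:
  "ascent_length p i \<ge> 2 \<longleftrightarrow> Suc i < length p \<and> p ! i \<and> p ! Suc i"
proof (cases "Suc i < length p")
  case True
  then have "drop i p = p ! i # p ! Suc i # drop (Suc (Suc i)) p"
    by (metis Cons_nth_drop_Suc Suc_lessD)
  then show ?thesis using True by (simp add: ascent_length_def)
next
  case False
  have "length (takeWhile id (drop i p)) \<le> length (drop i p)"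
    by (rule length_takeWhile_le)
  also have "\<dots> \<le> 1" using False by simp
  finally show ?thesis using False by (simp add: ascent_length_def)
qed

lemma long_noninitial_ascents_eq_duu_count:
  assumes "p \<noteq> []" "hd p"
  shows "long_noninitial_ascents p = duu_count p"
proof -
  have "0 \<in> ascent_starts p" using assms by (simp add: ascent_starts_def hd_conv_nth)
  moreover have "finite (ascent_starts p)" by (simp add: ascent_starts_def)
  ultimately have "Min (ascent_starts p) = 0" by (meson Min_eqI le0)
  then have "{i \<in> ascent_starts p. i \<noteq> Min (ascent_starts p) \<and> ascent_length p i \<ge> 2}
      = Suc ` {i. i + 2 < length p \<and> \<not> p ! i \<and> p ! (i + 1) \<and> p ! (i + 2)}"
    by (auto simp: ascent_starts_def ascent_length_ge_2_iff image_iff gr0_conv_Suc)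
  then show ?thesis
    unfolding long_noninitial_ascents_def duu_count_eq_card by (simp add: card_image)
qed

lemma duu_count_Cons_True: "duu_count (True # ys) = duu_count ys"
  by (cases ys rule: remdups_adj.cases) auto

lemma duu_count_Cons_Cons_False: "duu_count (a # False # ys) = duu_count (False # ys)"
  by (cases ys) auto

lemma duu_count_False_True:
  "duu_count (False # True # ys) = (if ys \<noteq> [] \<and> hd ys then 1 else 0) + duu_count (True # ys)"
  by (cases ys) auto

lemma duu_count_snoc_False: "duu_count (xs @ [False]) = duu_count xs"
  by (induction xs rule: duu_count.induct) auto

lemma duu_count_append_False:
  "duu_count (xs @ False # ys) = duu_count (xs @ [False]) + duu_count (False # ys)"
  by (induction xs rule: duu_count.induct) (auto simp: duu_count_Cons_Cons_False)

lemma hill_from_append: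
  "hill_from h (xs @ b # ys) \<longleftrightarrow>
     hill_from h (xs @ [b]) \<or> hill_from (h + end_height xs) (b # ys)"
proof (induction xs arbitrary: h)
  case (Cons a xs)
  then show ?case by (cases xs) (auto simp: add.assoc)
qed simp

lemma hill_from_snoc_True: "hill_from h (xs @ [True]) \<longleftrightarrow> hill_from h xs"
proof (induction xs arbitrary: h)
  case (Cons a xs)
  then show ?case by (cases xs) auto
qed simp

lemma no_hill_above_axis: "stays_nonneg h xs \<Longrightarrow> \<not> hill_from (h + 1) (xs @ [b])"
proof (induction xs arbitrary: h)
  case (Cons a xs)
  then have "\<not> hill_from (h + 1 + step_height a) (xs @ [b])"
    using Cons.IH[of "h + step_height a"] by (simp add: algebra_simps)
  with Cons.prems show ?case by (cases xs) auto
qed simp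

section \<open>The last-return decomposition\<close>

lemma is_dyck_Nil [simp]: "is_dyck []"
  by (simp add: is_dyck_def)

lemma is_dyck_ConsD: "is_dyck (b # xs) \<Longrightarrow> b"
  by (auto simp: is_dyck_def step_height_def split: if_splits dest: stays_nonneg_start)

lemma long_noninitial_ascents_dyck:
  assumes "is_dyck p"
  shows "long_noninitial_ascents p = duu_count p"
proof (cases p)
  case Nil
  then show ?thesis by (simp add: long_noninitial_ascents_def ascent_starts_def)
next
  case (Cons b xs)
  with assms have b by (blast dest: is_dyck_ConsD)
  with Cons show ?thesis by (intro long_noninitial_ascents_eq_duu_count) auto
qed

lemma is_dyck_snocE:
  assumes "is_dyck q" "q \<noteq> []"
  obtains q' where "q = q' @ [False]"
proof -
  obtain q' b where q: "q = q' @ [b]" using assms(2) by (metis rev_exhaust)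
  have "b = False"
  proof (rule ccontr)
    assume "b \<noteq> False"
    then have "end_height q' = -1" using assms(1) q by (simp add: is_dyck_def step_height_def)
    moreover have "stays_nonneg 0 q'" using assms(1) q by (simp add: is_dyck_def stays_nonneg_append)
    ultimately show False using stays_nonneg_end[of 0 q'] by simp
  qed
  with q that show ?thesis by blast
qed

lemma split_at_first_descent:
  "end_height xs \<le> -1 \<Longrightarrow> \<exists>ys zs. xs = ys @ False # zs \<and> is_dyck ys"
proof (induction "length xs" arbitrary: xs rule: less_induct)
  case less
  then obtain b xs' where xs: "xs = b # xs'" by (cases xs) auto
  show ?case
  proof (cases b)
    case False
    with xs show ?thesis by (intro exI[of _ "[]"] exI[of _ xs']) auto
  next
    case True
    then have "end_height xs' \<le> -1" using less.prems xs by (simp add: step_height_def)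
    then obtain ys1 zs1 where 1: "xs' = ys1 @ False # zs1" "is_dyck ys1"
      using less.hyps[of xs'] xs by auto
    have "end_height zs1 \<le> -1" using less.prems xs True 1 by (simp add: step_height_def is_dyck_def)
    then obtain ys2 zs2 where 2: "zs1 = ys2 @ False # zs2" "is_dyck ys2"
      using less.hyps[of zs1] xs 1 by auto
    have "is_dyck (True # ys1 @ False # ys2)"
      using 1(2) 2(2) by (auto simp: is_dyck_def step_height_def stays_nonneg_append intro: stays_nonneg_mono)
    with xs True 1 2 show ?thesis by (intro exI[of _ "True # ys1 @ False # ys2"] exI[of _ zs2]) auto
  qed
qed

lemma is_dyck_join: "is_dyck q \<Longrightarrow> is_dyck r \<Longrightarrow> is_dyck (q @ True # r @ [False])"
  by (auto simp: is_dyck_def step_height_def stays_nonneg_append intro: stays_nonneg_mono)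

lemma dyck_decompose:
  "is_dyck p \<Longrightarrow> p \<noteq> [] \<Longrightarrow>
     \<exists>q r. p = q @ True # r @ [False] \<and> is_dyck q \<and> is_dyck r"
proof (induction "length p" arbitrary: p rule: less_induct)
  case less
  then obtain s where p: "p = True # s" by (cases p) (auto dest: is_dyck_ConsD)
  then have "end_height s \<le> -1" using less.prems by (simp add: is_dyck_def step_height_def)
  then obtain ys zs where yz: "s = ys @ False # zs" "is_dyck ys" using split_at_first_descent by blast
  have dz: "is_dyck zs" using less.prems p yz by (auto simp: is_dyck_def step_height_def stays_nonneg_append)
  show ?case
  proof (cases "zs = []")
    case True
    with p yz show ?thesis by (intro exI[of _ "[]"] exI[of _ ys]) auto
  next
    case False
    then obtain q' r where qr: "zs = q' @ True # r @ [False]" "is_dyck q'" "is_dyck r"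
      using less.hyps[of zs] dz p yz by auto
    have "is_dyck (True # ys @ False # q')" using yz(2) qr(2)
      by (auto simp: is_dyck_def step_height_def stays_nonneg_append intro: stays_nonneg_mono)
    with p yz qr show ?thesis by (intro exI[of _ "True # ys @ False # q'"] exI[of _ r]) auto
  qed
qed

lemma dyck_decompose_unique:
  assumes "q @ True # r @ [False] = q' @ True # r' @ [False]"
    and "is_dyck q" "is_dyck r" "is_dyck q'" "is_dyck r'"
  shows "q = q' \<and> r = r'"
proof -
  \<comment> \<open>a longer first factor would end with the step U of the other decomposition
      followed by a prefix of its second factor, hence strictly above the axis\<close>
  have length_le: "length b \<le> length a"
    if ab: "a @ True # c @ [False] = b @ True # d @ [False]" and "is_dyck a" "is_dyck c" "is_dyck b"
    for a b c d
  proof (rule ccontr)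
    assume "\<not> length b \<le> length a"
    with ab obtain vs where vs: "b = a @ vs" "vs \<noteq> []" "vs @ True # d @ [False] = True # c @ [False]"
      by (auto simp: append_eq_append_conv2)
    then obtain us where "vs = True # us" by (cases vs) auto
    with vs have us: "b = a @ True # us" "c = us @ True # d"
      using append1_eq_conv[of "us @ True # d" False c False] by auto
    then have "end_height us \<ge> 0"
      using \<open>is_dyck c\<close> stays_nonneg_end[of 0 us] by (simp add: is_dyck_def stays_nonneg_append)
    with us \<open>is_dyck a\<close> \<open>is_dyck b\<close> show False by (simp add: is_dyck_def step_height_def)
  qed
  have "length q = length q'"
    using length_le[OF assms(1,2,3,4)] length_le[OF assms(1)[symmetric] assms(4,5,2)] by simp
  with assms(1) show ?thesis by auto
qed

lemma hill_from_join:
  assumes "is_dyck q" "is_dyck r"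
  shows "hill_from 0 (q @ True # r @ [False]) \<longleftrightarrow> hill_from 0 q \<or> r = []"
proof -
  have "hill_from 0 (q @ True # r @ [False]) \<longleftrightarrow>
      hill_from 0 q \<or> hill_from 0 (True # r @ [False])"
    using hill_from_append[of 0 q True "r @ [False]"] assms(1)
    by (simp add: is_dyck_def hill_from_snoc_True)
  moreover have "hill_from 0 (True # r @ [False]) \<longleftrightarrow> r = []"
  proof (cases r)
    case (Cons c r')
    then have c using assms(2) is_dyck_ConsD by blast
    have "\<not> hill_from 1 (r @ [False])"
      using no_hill_above_axis[of 0 r] assms(2) by (simp add: is_dyck_def)
    with Cons \<open>c\<close> show ?thesis by (simp add: step_height_def)
  qed simp
  ultimately show ?thesis by simp
qed

lemma duu_count_join:
  assumes "is_dyck q" "is_dyck r"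
  shows "duu_count (q @ True # r @ [False]) =
           duu_count q + duu_count r + (if q \<noteq> [] \<and> r \<noteq> [] then 1 else 0)"
proof -
  have up_r_down: "duu_count (True # r @ [False]) = duu_count r"
    by (simp add: duu_count_Cons_True duu_count_snoc_False)
  show ?thesis
  proof (cases "q = []")
    case False
    then obtain q' where q: "q = q' @ [False]" using assms(1) by (elim is_dyck_snocE)
    have "duu_count (q @ True # r @ [False]) = duu_count q + duu_count (False # True # r @ [False])"
      using duu_count_append_False[of q' "True # r @ [False]"] q by simp
    also have "\<dots> = duu_count q + duu_count r + (if r \<noteq> [] then 1 else 0)"
    proof -
      have "r \<noteq> [] \<Longrightarrow> hd r" using assms(2) by (cases r) (auto dest: is_dyck_ConsD)
      then show ?thesis
        using duu_count_False_True[of "r @ [False]"] up_r_down by (cases "r = []") auto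
    qed
    finally show ?thesis using False by simp
  qed (simp add: up_r_down)
qed

section \<open>Generating functions\<close>

lemma length_plus_end_height:
  "int (length xs) + end_height xs = 2 * int (count_list xs True)"
  by (induction xs) (auto simp: step_height_def)

lemma length_is_dyck: "is_dyck q \<Longrightarrow> length q = 2 * count_list q True"
  using length_plus_end_height[of q] by (simp add: is_dyck_def)

definition dyck_paths :: "nat \<Rightarrow> bool list set" where
  "dyck_paths n = {p. length p = 2 * n \<and> is_dyck p}"

definition fine_paths :: "nat \<Rightarrow> bool list set" where
  "fine_paths n = {p \<in> dyck_paths n. \<not> hill_from 0 p}"

lemma finite_dyck_paths: "finite (dyck_paths n)"
proof (rule finite_subset)
  show "dyck_paths n \<subseteq> {xs. set xs \<subseteq> UNIV \<and> length xs = 2 * n}"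
    by (auto simp: dyck_paths_def)
qed (use finite_lists_length_eq[of "UNIV :: bool set" "2 * n"] in simp)

lemma finite_fine_paths: "finite (fine_paths n)"
  using finite_dyck_paths by (simp add: fine_paths_def)

lemma dyck_paths_0: "dyck_paths 0 = {[]}"
  by (auto simp: dyck_paths_def)

lemma fine_paths_0: "fine_paths 0 = {[]}"
  by (auto simp: fine_paths_def dyck_paths_0)

lemma dyck_paths_eq_Nil_iff: "r \<in> dyck_paths b \<Longrightarrow> r = [] \<longleftrightarrow> b = 0"
  by (auto simp: dyck_paths_def)

lemma bij_betw_join_dyck_paths:
  "bij_betw (\<lambda>(q, r). q @ True # r @ [False])
     (\<Union>a\<le>m. dyck_paths a \<times> dyck_paths (m - a)) (dyck_paths (Suc m))"
  (is "bij_betw ?join ?pairs _")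
proof (rule bij_betw_imageI)
  show "inj_on ?join ?pairs"
    by (rule inj_onI) (auto simp: dyck_paths_def dest: dyck_decompose_unique)
  show "?join ` ?pairs = dyck_paths (Suc m)"
  proof
    show "dyck_paths (Suc m) \<subseteq> ?join ` ?pairs"
    proof
      fix p assume p: "p \<in> dyck_paths (Suc m)"
      then obtain q r where qr: "p = q @ True # r @ [False]" "is_dyck q" "is_dyck r"
        using dyck_decompose by (force simp: dyck_paths_def)
      define a where "a = count_list q True"
      have "length q = 2 * a" "length r = 2 * count_list r True"
        using length_is_dyck qr a_def by auto
      moreover have "length q + length r = 2 * m" using p qr by (simp add: dyck_paths_def)
      ultimately have "a \<le> m" "length r = 2 * (m - a)" by linarith+
      with qr \<open>length q = 2 * a\<close> have "(q, r) \<in> dyck_paths a \<times> dyck_paths (m - a)"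
        by (simp add: dyck_paths_def)
      with qr(1) \<open>a \<le> m\<close> show "p \<in> ?join ` ?pairs"
        by (intro rev_image_eqI[of "(q, r)"]) auto
    qed
  qed (auto simp: dyck_paths_def is_dyck_join)
qed

lemma sum_dyck_paths_Suc:
  "(\<Sum>p\<in>dyck_paths (Suc m). f p) =
     (\<Sum>a\<le>m. \<Sum>q\<in>dyck_paths a. \<Sum>r\<in>dyck_paths (m - a). f (q @ True # r @ [False]))"
proof -
  have "(\<Sum>p\<in>dyck_paths (Suc m). f p) =
      (\<Sum>x\<in>(\<Union>a\<le>m. dyck_paths a \<times> dyck_paths (m - a)). f (fst x @ True # snd x @ [False]))"
    using sum.reindex_bij_betw[OF bij_betw_join_dyck_paths, of f] by (simp add: case_prod_beta)
  also have "\<dots> = (\<Sum>a\<le>m. \<Sum>x\<in>dyck_paths a \<times> dyck_paths (m - a).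
      f (fst x @ True # snd x @ [False]))"
    by (rule sum.UNION_disjoint) (simp_all add: finite_dyck_paths, auto simp: dyck_paths_def)
  also have "\<dots> =
      (\<Sum>a\<le>m. \<Sum>q\<in>dyck_paths a. \<Sum>r\<in>dyck_paths (m - a). f (q @ True # r @ [False]))"
    by (simp add: sum.cartesian_product case_prod_beta)
  finally show ?thesis .
qed

abbreviation T :: "real poly" where
  "T \<equiv> monom 1 1"

definition dyck_poly :: "nat \<Rightarrow> real poly" where
  "dyck_poly n = (\<Sum>p\<in>dyck_paths n. T ^ duu_count p)"

definition fine_poly :: "nat \<Rightarrow> real poly" where
  "fine_poly n = (\<Sum>p\<in>fine_paths n. T ^ duu_count p)"

lemma dyck_poly_0: "dyck_poly 0 = 1"
  by (simp add: dyck_poly_def dyck_paths_0)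

lemma fine_poly_0: "fine_poly 0 = 1"
  by (simp add: fine_poly_def fine_paths_0)

lemma coeff_fine_poly: "coeff (fine_poly n) k = real (card {p \<in> fine_paths n. duu_count p = k})"
proof -
  have "coeff (fine_poly n) k = (\<Sum>p\<in>fine_paths n. if duu_count p = k then 1 else 0)"
    unfolding fine_poly_def coeff_sum monom_power by simp
  also have "\<dots> = real (card {p \<in> fine_paths n. duu_count p = k})"
    using finite_fine_paths[of n] by (simp add: sum.If_cases Int_def)
  finally show ?thesis .
qed

lemma dyck_poly_Suc:
  "dyck_poly (Suc m) =
     (\<Sum>a\<le>m. (if a \<noteq> 0 \<and> m - a \<noteq> 0 then T else 1) * dyck_poly a * dyck_poly (m - a))"
proof -
  have "dyck_poly (Suc m) = (\<Sum>a\<le>m. \<Sum>q\<in>dyck_paths a. \<Sum>r\<in>dyck_paths (m - a).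
      T ^ duu_count (q @ True # r @ [False]))"
    unfolding dyck_poly_def by (rule sum_dyck_paths_Suc)
  also have "\<dots> = (\<Sum>a\<le>m. \<Sum>q\<in>dyck_paths a. \<Sum>r\<in>dyck_paths (m - a).
      (if a \<noteq> 0 \<and> m - a \<noteq> 0 then T else 1) * (T ^ duu_count q * T ^ duu_count r))"
    by (intro sum.cong refl) (auto simp: duu_count_join dyck_paths_def power_add
        dyck_paths_eq_Nil_iff[symmetric])
  also have "\<dots> = (\<Sum>a\<le>m. (if a \<noteq> 0 \<and> m - a \<noteq> 0 then T else 1) *
      ((\<Sum>q\<in>dyck_paths a. T ^ duu_count q) * (\<Sum>r\<in>dyck_paths (m - a). T ^ duu_count r)))"
    by (simp only: sum_distrib_left sum_distrib_right, rule sum.cong[OF refl], rule sum.swap)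
  also have "\<dots> =
      (\<Sum>a\<le>m. (if a \<noteq> 0 \<and> m - a \<noteq> 0 then T else 1) * dyck_poly a * dyck_poly (m - a))"
    by (simp only: dyck_poly_def mult.assoc)
  finally show ?thesis .
qed

lemma fine_poly_Suc:
  "fine_poly (Suc m) =
     (\<Sum>a\<le>m. (if a \<noteq> 0 then T else 1) * fine_poly a
        * (if m - a \<noteq> 0 then dyck_poly (m - a) else 0))"
proof -
  have fine_as_dyck:
    "fine_poly n = (\<Sum>p\<in>dyck_paths n. if \<not> hill_from 0 p then T ^ duu_count p else 0)" for n
    unfolding fine_poly_def fine_paths_def by (rule sum.inter_filter[OF finite_dyck_paths])
  have "fine_poly (Suc m) = (\<Sum>a\<le>m. \<Sum>q\<in>dyck_paths a. \<Sum>r\<in>dyck_paths (m - a).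
      if \<not> hill_from 0 (q @ True # r @ [False]) then T ^ duu_count (q @ True # r @ [False]) else 0)"
    unfolding fine_as_dyck by (rule sum_dyck_paths_Suc)
  also have "\<dots> = (\<Sum>a\<le>m. \<Sum>q\<in>dyck_paths a. \<Sum>r\<in>dyck_paths (m - a).
      (if a \<noteq> 0 then T else 1) * ((if \<not> hill_from 0 q then T ^ duu_count q else 0) *
        (if m - a \<noteq> 0 then T ^ duu_count r else 0)))"
    by (intro sum.cong refl) (auto simp: duu_count_join hill_from_join dyck_paths_def power_add
        dyck_paths_eq_Nil_iff[symmetric])
  also have "\<dots> = (\<Sum>a\<le>m. (if a \<noteq> 0 then T else 1) *
      ((\<Sum>q\<in>dyck_paths a. if \<not> hill_from 0 q then T ^ duu_count q else 0) *
       (\<Sum>r\<in>dyck_paths (m - a). if m - a \<noteq> 0 then T ^ duu_count r else 0)))"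
    by (simp only: sum_distrib_left sum_distrib_right, rule sum.cong[OF refl], rule sum.swap)
  also have "\<dots> = (\<Sum>a\<le>m. (if a \<noteq> 0 then T else 1) * fine_poly a
      * (if m - a \<noteq> 0 then dyck_poly (m - a) else 0))"
    by (intro sum.cong refl) (auto simp: fine_as_dyck dyck_poly_def)
  finally show ?thesis .
qed

definition dyck_gf :: "real poly fps" where
  "dyck_gf = Abs_fps dyck_poly - 1"

definition fine_gf :: "real poly fps" where
  "fine_gf = Abs_fps fine_poly - 1"

lemma fps_nth_dyck_gf: "fps_nth dyck_gf n = (if n = 0 then 0 else dyck_poly n)"
  by (simp add: dyck_gf_def dyck_poly_0)

lemma fps_nth_fine_gf: "fps_nth fine_gf n = (if n = 0 then 0 else fine_poly n)"
  by (simp add: fine_gf_def fine_poly_0)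

lemma dyck_gf_eq: "dyck_gf = fps_X * (1 + 2 * dyck_gf + fps_const T * dyck_gf ^ 2)"
proof -
  let ?D = "Abs_fps dyck_poly"
  \<comment> \<open>joining q and r gains the factor t exactly when both are nonempty\<close>
  have "?D = 1 + fps_X * (?D * ?D + fps_const (T - 1) * (dyck_gf * dyck_gf))"
  proof (rule fps_ext)
    fix n
    show "fps_nth ?D n = fps_nth (1 + fps_X * (?D * ?D + fps_const (T - 1) * (dyck_gf * dyck_gf))) n"
    proof (cases n)
      case (Suc m)
      have "fps_nth ?D n =
          (\<Sum>a\<le>m. (if a \<noteq> 0 \<and> m - a \<noteq> 0 then T else 1) * dyck_poly a * dyck_poly (m - a))"
        using Suc dyck_poly_Suc by simp
      also have "\<dots> = (\<Sum>a=0..m. fps_nth ?D a * fps_nth ?D (m - a)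
          + (T - 1) * (fps_nth dyck_gf a * fps_nth dyck_gf (m - a)))"
        by (rule sum.cong) (auto simp: atLeast0AtMost fps_nth_dyck_gf algebra_simps)
      also have "\<dots> = fps_nth (?D * ?D + fps_const (T - 1) * (dyck_gf * dyck_gf)) m"
        by (simp only: fps_add_nth fps_mult_left_const_nth)
          (simp only: fps_mult_nth sum.distrib sum_distrib_left)
      finally show ?thesis using Suc by simp
    qed (simp add: dyck_poly_0)
  qed
  moreover have "fps_const (T - 1) = fps_const T - 1"
    by (metis fps_const_1_eq_1 fps_const_sub)
  ultimately have "dyck_gf + 1 = 1 + fps_X * ((dyck_gf + 1) * (dyck_gf + 1)
      + (fps_const T - 1) * (dyck_gf * dyck_gf))"
    by (simp add: dyck_gf_def)
  then show ?thesis by (simp add: algebra_simps power2_eq_square)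
qed

lemma fine_gf_eq: "fine_gf = fps_X * (1 + fps_const T * fine_gf) * dyck_gf"
proof -
  have "Abs_fps fine_poly = 1 + fps_X * ((1 + fps_const T * fine_gf) * dyck_gf)"
  proof (rule fps_ext)
    fix n
    show "fps_nth (Abs_fps fine_poly) n = fps_nth (1 + fps_X * ((1 + fps_const T * fine_gf) * dyck_gf)) n"
    proof (cases n)
      case (Suc m)
      have "fps_nth (Abs_fps fine_poly) n = (\<Sum>a\<le>m. (if a \<noteq> 0 then T else 1) * fine_poly a
          * (if m - a \<noteq> 0 then dyck_poly (m - a) else 0))"
        using Suc fine_poly_Suc by simp
      also have "\<dots> = (\<Sum>a=0..m. fps_nth (1 + fps_const T * fine_gf) a * fps_nth dyck_gf (m - a))"
        by (rule sum.cong) (auto simp: atLeast0AtMost fps_nth_fine_gf fps_nth_dyck_gf fine_poly_0)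
      also have "\<dots> = fps_nth ((1 + fps_const T * fine_gf) * dyck_gf) m"
        by (simp add: fps_mult_nth)
      finally show ?thesis using Suc by simp
    qed (simp add: fine_poly_0)
  qed
  then show ?thesis by (simp add: fine_gf_def algebra_simps)
qed

lemma fine_gf_mult_eq: "fine_gf * (1 + 2 * dyck_gf) = dyck_gf ^ 2"
proof -
  \<comment> \<open>both functional equations contain the factor U, a unit since its constant term is 1\<close>
  define U where "U = 1 - fps_X * fps_const T * dyck_gf"
  have W: "dyck_gf * U = fps_X * (1 + 2 * dyck_gf)"
    using dyck_gf_eq unfolding U_def by (simp add: algebra_simps power2_eq_square)
  have G: "fine_gf * U = fps_X * dyck_gf"
    using fine_gf_eq unfolding U_def by (simp add: algebra_simps)
  have "U * (fine_gf * (1 + 2 * dyck_gf)) = (fine_gf * U) * (1 + 2 * dyck_gf)"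
    by (simp only: ac_simps)
  also have "\<dots> = dyck_gf * (fps_X * (1 + 2 * dyck_gf))"
    by (simp only: G ac_simps)
  also have "\<dots> = U * dyck_gf ^ 2"
    unfolding W[symmetric] by (simp only: power2_eq_square ac_simps)
  finally have "U * (fine_gf * (1 + 2 * dyck_gf)) = U * dyck_gf ^ 2" .
  moreover have "U \<noteq> 0"
  proof
    assume "U = 0"
    then have "fps_nth U 0 = 0" by simp
    then show False by (simp add: U_def)
  qed
  ultimately show ?thesis by simp
qed

lemma dyck_gf_power_Suc_eq:
  "dyck_gf ^ Suc m = fps_X * (dyck_gf ^ m + 2 * dyck_gf ^ Suc m + fps_const T * dyck_gf ^ Suc (Suc m))"
proof -
  have "dyck_gf ^ Suc m = dyck_gf ^ m * (fps_X * (1 + 2 * dyck_gf + fps_const T * dyck_gf ^ 2))"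
    by (metis dyck_gf_eq power_Suc2)
  also have "\<dots> = fps_X * (dyck_gf ^ m + 2 * dyck_gf ^ Suc m + fps_const T * dyck_gf ^ Suc (Suc m))"
    by (simp add: algebra_simps power2_eq_square)
  finally show ?thesis .
qed

lemma fps_nth_fine_gf_mult_power_eq_0: "n < j + 2 \<Longrightarrow> fps_nth (fine_gf * dyck_gf ^ j) n = 0"
proof -
  assume "n < j + 2"
  define V where "V = 1 + 2 * dyck_gf + fps_const T * dyck_gf ^ 2"
  have "fine_gf * dyck_gf ^ j = fps_X * (1 + fps_const T * fine_gf) * (fps_X * V) * (fps_X * V) ^ j"
    using fine_gf_eq dyck_gf_eq unfolding V_def by (metis power_Suc2 mult.assoc)
  also have "\<dots> = fps_X ^ (j + 2) * ((1 + fps_const T * fine_gf) * V ^ (j + 1))"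
    by (simp add: power_mult_distrib algebra_simps)
  finally show ?thesis using \<open>n < j + 2\<close> by (simp only: fps_X_power_mult_nth if_True)
qed

section \<open>Closed forms for the coefficients\<close>

text \<open>The reciprocal factorial, extended by 0 to negative arguments, so that the closed forms
  below vanish outside their support without case distinctions.\<close>

definition inv_fact :: "int \<Rightarrow> real" where
  "inv_fact z = (if z < 0 then 0 else 1 / fact (nat z))"

lemma inv_fact_neg: "z < 0 \<Longrightarrow> inv_fact z = 0"
  by (simp add: inv_fact_def)

lemma inv_fact_pred: "inv_fact (z - 1) = of_int z * inv_fact z"
proof (cases "z \<le> 0")
  case True
  then show ?thesis by (cases "z = 0") (auto simp: inv_fact_def)
next
  case False
  define n where "n = nat z - 1"
  with False have n: "z = int (Suc n)" by simp
  then have "inv_fact (z - 1) = 1 / fact n" "inv_fact z = 1 / fact (Suc n)"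
    by (simp add: inv_fact_def, simp add: inv_fact_def del: of_nat_Suc)
  with n show ?thesis by (simp del: of_nat_Suc)
qed

definition two_exponent :: "nat \<Rightarrow> nat \<Rightarrow> nat \<Rightarrow> int" where
  "two_exponent m n k = int n - int m - 2 * int k"

text \<open>The coefficient of x^n t^k in W^m, read off from the Lagrange inversion formula
  [x^n] W^m = m/n [w^(n-m)] (1 + 2 w + t w^2)^n.\<close>

definition dyck_power_coeff :: "nat \<Rightarrow> nat \<Rightarrow> nat \<Rightarrow> real" where
  "dyck_power_coeff m n k =
     (if m = 0 then (if n = 0 \<and> k = 0 then 1 else 0)
      else real m * fact (n - 1) * 2 powi two_exponent m n k
        * inv_fact (int k) * inv_fact (int (m + k)) * inv_fact (two_exponent m n k))"

lemma dyck_power_coeff_rec: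
  assumes m: "m \<ge> 1"
  shows "dyck_power_coeff m (Suc n) k = dyck_power_coeff (m - 1) n k + 2 * dyck_power_coeff m n k
           + (if k = 0 then 0 else dyck_power_coeff (m + 1) n (k - 1))"
proof (cases "n = 0 \<and> m = 1 \<and> k = 0")
  case True
  then show ?thesis by (simp add: dyck_power_coeff_def two_exponent_def inv_fact_def)
next
  case False
  define c where "c = two_exponent m (Suc n) k"
  define Z where "Z = fact (n - 1) * 2 powi c * inv_fact (int k) * inv_fact (int (m + k)) * inv_fact c"
  have c: "real_of_int c = real n + 1 - real m - 2 * real k" by (simp add: c_def two_exponent_def)
  have lhs: "dyck_power_coeff m (Suc n) k = real m * real n * Z"
  proof (cases "n = 0")
    case True
    with False m have "c < 0" by (cases "m = 1") (auto simp: c_def two_exponent_def)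
    with m show ?thesis by (simp add: dyck_power_coeff_def Z_def inv_fact_neg c_def)
  next
    case False
    then have "fact n = real n * fact (n - 1)" by (simp add: fact_reduce)
    with m show ?thesis by (simp add: dyck_power_coeff_def c_def Z_def)
  qed
  have down: "dyck_power_coeff (m - 1) n k = real (m - 1) * (real m + real k) * Z"
  proof (cases "m = 1")
    case False
    have "inv_fact (int (m - 1 + k)) = (m + k) * inv_fact (int (m + k))"
      using inv_fact_pred[of "int (m + k)"] m by (simp add: of_nat_diff)
    with False m show ?thesis
      by (simp add: dyck_power_coeff_def Z_def c_def two_exponent_def of_nat_diff algebra_simps)
  qed (use \<open>\<not> (n = 0 \<and> m = 1 \<and> k = 0)\<close> in \<open>auto simp: dyck_power_coeff_def\<close>)
  have flat: "2 * dyck_power_coeff m n k = real m * of_int c * Z"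
  proof -
    have "two_exponent m n k = c - 1" by (simp add: c_def two_exponent_def)
    moreover have "(2::real) powi (c - 1) = 2 powi c / 2" by (simp add: power_int_diff)
    ultimately show ?thesis using m inv_fact_pred[of c] by (simp add: dyck_power_coeff_def Z_def)
  qed
  have up: "(if k = 0 then 0 else dyck_power_coeff (m + 1) n (k - 1)) = real (m + 1) * real k * Z"
  proof (cases "k = 0")
    case False
    then have "two_exponent (m + 1) n (k - 1) = c" "m + 1 + (k - 1) = m + k"
      by (simp_all add: c_def two_exponent_def of_nat_diff)
    moreover have "inv_fact (int (k - 1)) = k * inv_fact (int k)"
      using inv_fact_pred[of "int k"] False by (simp add: of_nat_diff)
    ultimately show ?thesis using False by (simp add: dyck_power_coeff_def Z_def)
  qed simp
  have "real m * real n = real (m - 1) * (real m + real k) + real m * of_int c + real (m + 1) * real k"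
    using m by (simp add: c of_nat_diff algebra_simps)
  then show ?thesis unfolding lhs down flat up by (simp add: algebra_simps)
qed

lemma fps_nth_mult_2: "fps_nth (2 * A) n = 2 * fps_nth A n"
  by (metis fps_add_nth mult_2)

lemma coeff_mult_2: "coeff (2 * p) k = 2 * coeff p k"
  by (metis coeff_add mult_2)

lemma coeff_dyck_gf_power: "coeff (fps_nth (dyck_gf ^ m) n) k = dyck_power_coeff m n k"
proof (induction n arbitrary: m k)
  case 0
  show ?case
    by (cases m) (auto simp: fps_nth_power_0 fps_nth_dyck_gf dyck_power_coeff_def
        two_exponent_def inv_fact_neg)
next
  case (Suc n)
  note IH = Suc.IH
  show ?case
  proof (cases m)
    case 0
    then show ?thesis by (simp add: dyck_power_coeff_def)
  next
    case (Suc m')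
    have "fps_nth (dyck_gf ^ Suc m') (Suc n) = fps_nth (dyck_gf ^ m' + 2 * dyck_gf ^ Suc m'
        + fps_const T * dyck_gf ^ Suc (Suc m')) n"
      using arg_cong[OF dyck_gf_power_Suc_eq[of m'], of "\<lambda>A. fps_nth A (Suc n)"] by simp
    then have "coeff (fps_nth (dyck_gf ^ Suc m') (Suc n)) k = coeff (fps_nth (dyck_gf ^ m') n) k
        + 2 * coeff (fps_nth (dyck_gf ^ Suc m') n) k
        + (if k = 0 then 0 else coeff (fps_nth (dyck_gf ^ Suc (Suc m')) n) (k - 1))"
      by (simp add: fps_nth_mult_2 coeff_mult_2 coeff_monom_mult)
    also have "\<dots> = dyck_power_coeff m' n k + 2 * dyck_power_coeff (Suc m') n k
        + (if k = 0 then 0 else dyck_power_coeff (Suc (Suc m')) n (k - 1))"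
      by (simp only: IH)
    finally show ?thesis
      using \<open>m = Suc m'\<close> dyck_power_coeff_rec[of m n k] by simp
  qed
qed

text \<open>The coefficient of x^n t^k in G W^(m-2). Where the factors inv_fact do not vanish and
  m \<ge> 2, we have n - k \<ge> m + k \<ge> 2, so the denominator is nonzero there.\<close>

definition fine_power_coeff :: "nat \<Rightarrow> nat \<Rightarrow> nat \<Rightarrow> real" where
  "fine_power_coeff m n k =
     fact (n - 1) * 2 powi two_exponent m n k
       * (real m * (real m + real k - 1) + (real m - 1) * of_int (two_exponent m n k))
       * inv_fact (int k) * inv_fact (int (m + k) - 1) * inv_fact (two_exponent m n k)
       / ((real n - real k) * (real n - real k - 1))"

lemma fine_power_coeff_eq_0: "n < m \<Longrightarrow> fine_power_coeff m n k = 0"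
  by (simp add: fine_power_coeff_def inv_fact_neg two_exponent_def)

lemma fine_power_coeff_telescope:
  assumes m: "m \<ge> 2"
  shows "fine_power_coeff m n k + 2 * fine_power_coeff (m + 1) n k = dyck_power_coeff m n k"
proof -
  define c where "c = two_exponent m n k"
  define D where "D = (real n - real k) * (real n - real k - 1)"
  define Z where "Z = fact (n - 1) * 2 powi c * inv_fact (int k) * inv_fact (int (m + k)) * inv_fact c"
  define A where "A = real m * (real m + real k - 1) + (real m - 1) * of_int c"
  define B where "B = real (m + 1) * (real m + real k) + real m * (of_int c - 1)"
  have P: "dyck_power_coeff m n k = Z * real m"
    using m by (simp add: dyck_power_coeff_def c_def Z_def mult_ac)
  have R1: "fine_power_coeff m n k = Z * ((real m + real k) * A) / D"
    using inv_fact_pred[of "int (m + k)"]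
    by (simp add: fine_power_coeff_def c_def Z_def D_def A_def mult_ac)
  have R2: "fine_power_coeff (m + 1) n k = Z * (of_int c * B) / (2 * D)"
  proof -
    have "two_exponent (m + 1) n k = c - 1" by (simp add: c_def two_exponent_def)
    moreover have "inv_fact (c - 1) = c * inv_fact c" by (rule inv_fact_pred)
    moreover have "(2::real) powi c = 2 * 2 powi (c - 1)" by (simp add: power_int_diff)
    ultimately show ?thesis
      by (simp add: fine_power_coeff_def Z_def D_def B_def mult_ac add_ac)
  qed
  show ?thesis
  proof (cases "c < 0")
    case True
    then have "Z = 0" by (simp add: Z_def inv_fact_neg)
    then show ?thesis using P R1 R2 by simp
  next
    case False
    then have "D \<noteq> 0" using m unfolding D_def c_def two_exponent_def by auto
    have key: "(real m + real k) * A + of_int c * B = real m * D"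
      by (simp add: A_def B_def D_def c_def two_exponent_def algebra_simps)
    have "fine_power_coeff m n k + 2 * fine_power_coeff (m + 1) n k
        = Z * ((real m + real k) * A + of_int c * B) / D"
      unfolding R1 R2 by (simp add: add_divide_distrib distrib_left)
    also have "\<dots> = Z * real m" using key \<open>D \<noteq> 0\<close> by simp
    finally show ?thesis using P by simp
  qed
qed

definition fine_closed_form :: "nat \<Rightarrow> nat \<Rightarrow> real" where
  "fine_closed_form n k = 1 / real (n + 1) * real ((n - 2 - k) choose k) * 2 ^ (n - 2 - 2 * k)
     * real ((n + 1) choose (k + 1))"

lemma fine_power_coeff_2_factorials:
  assumes nc: "n = c + 2 * k + 2"
  shows "fine_power_coeff 2 n k = fact n * 2 ^ c
           / (fact k * fact (k + 1) * fact c * ((real n - real k) * (real n - real k - 1)))"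
proof -
  have "fine_power_coeff 2 n k = fact (n - 1) * 2 ^ c * real n
      / (fact k * fact (k + 1) * fact c * ((real n - real k) * (real n - real k - 1)))"
    using nc by (simp add: fine_power_coeff_def two_exponent_def inv_fact_def nat_add_distrib)
  also have "\<dots> = fact n * 2 ^ c
      / (fact k * fact (k + 1) * fact c * ((real n - real k) * (real n - real k - 1)))"
    using nc by (simp add: fact_reduce[of n])
  finally show ?thesis .
qed

lemma fine_closed_form_factorials:
  assumes nc: "n = c + 2 * k + 2"
  shows "fine_closed_form n k = fact n * 2 ^ c
           / (fact k * fact (k + 1) * fact c * ((real n - real k) * (real n - real k - 1)))"
proof -
  have field_identity:
    "1 / x * (e / (a * f)) * P * (x * N / (b * (u * v * e))) = N * P / (a * b * f * (u * v))"
    if "x \<noteq> 0" "e \<noteq> 0" "a \<noteq> 0" "b \<noteq> 0" "f \<noteq> 0" "u \<noteq> 0" "v \<noteq> 0"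
    for x e a b f u v N P :: real
    using that by (simp add: field_simps)
  have "n - k = Suc (Suc (k + c))" "n - 2 - k = k + c" "n - 2 - 2 * k = c" using nc by simp_all
  then have "(fact (n - k) :: real) = (real n - real k) * (real n - real k - 1) * fact (k + c)"
    using nc by (simp add: algebra_simps)
  moreover have "real ((n + 1) choose (k + 1)) = fact (n + 1) / (fact (k + 1) * fact (n - k))"
    using binomial_fact[of "k + 1" "n + 1"] nc by simp
  moreover have "(fact (n + 1) :: real) = real (n + 1) * fact n" by simp
  ultimately have "real ((n + 1) choose (k + 1)) = real (n + 1) * fact n
      / (fact (k + 1) * ((real n - real k) * (real n - real k - 1) * fact (k + c)))"
    by (simp only:)
  moreover have "real ((n - 2 - k) choose k) = fact (k + c) / (fact k * fact c)"
    using binomial_fact[of k "k + c"] \<open>n - 2 - k = k + c\<close> by simp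
  ultimately have "fine_closed_form n k = 1 / real (n + 1) * (fact (k + c) / (fact k * fact c)) * 2 ^ c
      * (real (n + 1) * fact n
         / (fact (k + 1) * ((real n - real k) * (real n - real k - 1) * fact (k + c))))"
    using \<open>n - 2 - 2 * k = c\<close> by (simp only: fine_closed_form_def)
  moreover have "real n - real k \<noteq> 0" "real n - real k - 1 \<noteq> 0" using nc by auto
  ultimately show ?thesis
    by (simp only: field_identity fact_nonzero of_nat_Suc) (simp add: ac_simps)
qed

lemma fine_power_coeff_2:
  assumes n: "n \<ge> 2"
  shows "fine_power_coeff 2 n k = fine_closed_form n k"
proof (cases "2 + 2 * k \<le> n")
  case True
  then have "n = (n - 2 - 2 * k) + 2 * k + 2" by simp
  then show ?thesis
    by (simp only: fine_power_coeff_2_factorials fine_closed_form_factorials)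
next
  case False
  then have "fine_power_coeff 2 n k = 0"
    by (simp add: fine_power_coeff_def inv_fact_neg two_exponent_def)
  moreover have "(n - 2 - k) choose k = 0" using False n by (intro binomial_eq_0) linarith
  ultimately show ?thesis by (simp add: fine_closed_form_def)
qed

lemma coeff_fine_gf_mult_power:
  "coeff (fps_nth (fine_gf * dyck_gf ^ j) n) k = fine_power_coeff (j + 2) n k"
proof (induction "n - j" arbitrary: j)
  case 0
  then show ?case by (simp add: fps_nth_fine_gf_mult_power_eq_0 fine_power_coeff_eq_0)
next
  case (Suc d)
  have "fine_gf * dyck_gf ^ j + 2 * (fine_gf * dyck_gf ^ Suc j)
      = fine_gf * (1 + 2 * dyck_gf) * dyck_gf ^ j"
    by (simp add: algebra_simps)
  also have "\<dots> = dyck_gf ^ (j + 2)"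
    unfolding fine_gf_mult_eq by (simp only: power_add mult.commute)
  finally have "fine_gf * dyck_gf ^ j + 2 * (fine_gf * dyck_gf ^ Suc j) = dyck_gf ^ (j + 2)" .
  from arg_cong[OF this, of "\<lambda>A. coeff (fps_nth A n) k"]
  have "coeff (fps_nth (fine_gf * dyck_gf ^ j) n) k
      + 2 * coeff (fps_nth (fine_gf * dyck_gf ^ Suc j) n) k = dyck_power_coeff (j + 2) n k"
    by (simp only: fps_add_nth coeff_add fps_nth_mult_2 coeff_mult_2 coeff_dyck_gf_power)
  moreover have "coeff (fps_nth (fine_gf * dyck_gf ^ Suc j) n) k = fine_power_coeff (j + 2 + 1) n k"
    using Suc.hyps(1)[of "Suc j"] Suc.hyps(2) by (simp add: numeral_eq_Suc)
  ultimately show ?case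
    using fine_power_coeff_telescope[of "j + 2" n k] by simp
qed

section \<open>Counting Fine paths\<close>

lemma fine_path_iff_mem_fine_paths: "fine_path n p \<longleftrightarrow> p \<in> fine_paths n"
  by (simp add: fine_path_def dyck_path_iff_is_dyck has_hill_iff_hill_from fine_paths_def dyck_paths_def)

lemma card_fine_paths_long_noninitial_ascents:
  assumes "n \<ge> 2"
  shows "real (card {p. fine_path n p \<and> long_noninitial_ascents p = k}) = fine_closed_form n k"
proof -
  have "{p. fine_path n p \<and> long_noninitial_ascents p = k} = {p \<in> fine_paths n. duu_count p = k}"
    by (auto simp: fine_path_iff_mem_fine_paths fine_paths_def dyck_paths_def long_noninitial_ascents_dyck)
  then have "real (card {p. fine_path n p \<and> long_noninitial_ascents p = k}) = coeff (fps_nth fine_gf n) k"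
    using assms by (simp add: coeff_fine_poly fps_nth_fine_gf)
  also have "\<dots> = fine_power_coeff 2 n k"
    using coeff_fine_gf_mult_power[of 0 n k] by (simp add: numeral_2_eq_2)
  also have "\<dots> = fine_closed_form n k"
    using assms by (rule fine_power_coeff_2)
  finally show ?thesis .
qed

lemma duu_count_le_length: "duu_count p \<le> length p"
  by (induction p rule: duu_count.induct) auto

lemma fine_number_eq_sum:
  assumes "n \<ge> 2"
  shows "real (fine_number n) = (\<Sum>j\<in>{0..n}. fine_closed_form n j)"
proof -
  define S where "S j = {p. fine_path n p \<and> long_noninitial_ascents p = j}" for j
  have "long_noninitial_ascents p \<le> 2 * n" if "p \<in> fine_paths n" for p
    using that duu_count_le_length[of p]
    by (simp add: fine_paths_def dyck_paths_def long_noninitial_ascents_dyck)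
  then have "fine_paths n = (\<Union>j\<in>{0..2 * n}. S j)"
    by (auto simp: S_def fine_path_iff_mem_fine_paths)
  moreover have "card (\<Union>j\<in>{0..2 * n}. S j) = (\<Sum>j\<in>{0..2 * n}. card (S j))"
    by (rule card_UN_disjoint)
      (auto simp: S_def fine_path_iff_mem_fine_paths intro: finite_subset[OF _ finite_fine_paths])
  ultimately have "real (fine_number n) = (\<Sum>j\<in>{0..2 * n}. fine_closed_form n j)"
    using card_fine_paths_long_noninitial_ascents[OF assms]
    by (simp add: fine_number_def fine_path_iff_mem_fine_paths S_def)
  also have "\<dots> = (\<Sum>j\<in>{0..n}. fine_closed_form n j)"
    by (rule sum.mono_neutral_right) (auto simp: fine_closed_form_def)
  finally show ?thesis .
qed

theorem mainTheorem3:
  fixes n k :: nat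
  assumes "n \<ge> 2"
  shows "real (card {p. fine_path n p \<and> long_noninitial_ascents p = k}) =
           1 / real (n + 1) * real ((n - 2 - k) choose k) * 2 ^ (n - 2 - 2 * k)
             * real ((n + 1) choose (k + 1))
       \<and> real (fine_number n) =
           1 / real (n + 1) * (\<Sum>j\<in>{0..n}. real ((n - 2 - j) choose j) * 2 ^ (n - 2 - 2 * j)
             * real ((n + 1) choose (j + 1)))"
  using card_fine_paths_long_noninitial_ascents[OF assms, of k] fine_number_eq_sum[OF assms]
  by (simp add: fine_closed_form_def sum_distrib_left mult.assoc)

end
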